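(* Let $q$ be a prime power, $\mathcal{H}_q$ the Hermitian curve over $\mathbb{F}_{q^2}$ with $g=g(\mathcal{H}_q)=\frac{q(q-1)}{2}$, and $X,T$ fixed positive integers. Consider the $X$-secure, $T$-private PIR schemes with rate $\frac{L}{N}$, $N=L+X+T+3q^2-q-2$, obtained from the Hermitian construction for the admissible values of $L$, namely those $L$ with $L+g\equiv 0\pmod q$ for which the required points fit in $\mathcal{H}_q(\mathbb{F}_{q^2})$, i.e. $q^3+1\ge 2L+X+T+4q^2-2q$. Then the maximum rate of these schemes is $\mathcal{R}^{\mathcal{H}_q}_{\max}=\frac{L}{N}$ with $L=mq-g$ and $$m=\left\lfloor\frac{q^3-3q^2+q+1-(X+T)}{2q}\right\rfloor .$$
   Context: The Hermitian curve $\mathcal{H}_q$ is the curve over $\mathbb{F}_{q^2}$ with affine equation $X^{q+1}=Y^q+Y$; it has exactly $q^3+1$ $\mathbb{F}_{q^2}$-rational points, $P_\infty$ denotes its point at infinity and $P_0=(0,0)$. The Hermitian construction: for $L$ with $L+g\equiv 0\pmod q$, $m=(L+g)/q$, one uses $mq$ affine rational points $P_{i,z}=(\alpha_i,\beta_{i,z})$ ($\alpha_i\ne0$ distinct, $i\in[m]$, $z\in[q]$), the points $P_\infty,P_0$, and $L+X+T+\frac{7q^2-3q-6}{2}+1$ further rational points distinct from these, yielding an $X$-secure and $T$-private information retrieval scheme with $N=L+X+T+3q^2-q-2$ servers and rate $L/N$. The total number of rational points needed is $2L+X+T+4q^2-2q$. *)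

theory Defs
  imports Complex_Main "HOL-Computational_Algebra.Primes"
begin

definition prime_power_q :: "nat \<Rightarrow> bool" where
  "prime_power_q q \<longleftrightarrow> (\<exists>p k. prime p \<and> k \<ge> 1 \<and> q = p ^ k)"

definition herm_genus :: "nat \<Rightarrow> int" where
  "herm_genus q = int q * (int q - 1) div 2"

definition herm_servers :: "nat \<Rightarrow> nat \<Rightarrow> nat \<Rightarrow> int \<Rightarrow> int" where
  "herm_servers q X T L = L + int X + int T + 3 * int q ^ 2 - int q - 2"

definition herm_admissible :: "nat \<Rightarrow> nat \<Rightarrow> nat \<Rightarrow> int \<Rightarrow> bool" where
  "herm_admissible q X T L \<longleftrightarrow>
     L \<ge> 1 \<and> (L + herm_genus q) mod int q = 0 \<and>
     int q ^ 3 + 1 \<ge> 2 * L + int X + int T + 4 * int q ^ 2 - 2 * int q"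

definition herm_rate :: "nat \<Rightarrow> nat \<Rightarrow> nat \<Rightarrow> int \<Rightarrow> real" where
  "herm_rate q X T L = real_of_int L / real_of_int (herm_servers q X T L)"

definition herm_rates :: "nat \<Rightarrow> nat \<Rightarrow> nat \<Rightarrow> real set" where
  "herm_rates q X T = herm_rate q X T ` {L. herm_admissible q X T L}"

end

theory Submission
  imports Defs
begin

text \<open>Writing \<open>L + g = j q\<close> and using \<open>2 g = q (q - 1)\<close>, the point-count condition on \<open>L\<close>
  becomes \<open>2 q j \<le> q\<^sup>3 - 3 q\<^sup>2 + q + 1 - (X + T)\<close>, so the admissible \<open>L\<close> are exactly the
  values \<open>j q - g \<ge> 1\<close> with \<open>j \<le> m\<close>. Hence \<open>m q - g\<close> is the largest admissible value
  as soon as there is any, and the rate \<open>L / (L + c)\<close>, with \<open>c = X + T + 3 q\<^sup>2 - q - 2 > 0\<close>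
  independent of \<open>L\<close>, increases with \<open>L\<close>.\<close>

lemma le_div_iff_mult_le:
  fixes d j n :: int
  assumes "0 < d"
  shows "j \<le> n div d \<longleftrightarrow> d * j \<le> n"
proof
  assume "j \<le> n div d"
  then have "d * j \<le> d * (n div d)"
    using assms by simp
  also have "\<dots> \<le> n"
    using assms by (simp add: minus_mod_eq_mult_div [symmetric])
  finally show "d * j \<le> n" .
next
  assume "d * j \<le> n"
  then have "(d * j) div d \<le> n div d"
    using assms by (intro zdiv_mono1) auto
  then show "j \<le> n div d"
    using assms by simp
qed

lemma divide_add_right_mono:
  fixes a b c :: "'a::linordered_field"
  assumes "0 < a + c" and "0 \<le> c" and "a \<le> b"
  shows "a / (a + c) \<le> b / (b + c)"
proof -
  have "c / (b + c) \<le> c / (a + c)"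
    using assms by (intro divide_left_mono) auto
  moreover have "x / (x + c) = 1 - c / (x + c)" if "0 < x + c" for x
    using that by (simp add: field_simps)
  ultimately show ?thesis
    using assms by simp
qed

lemma prime_power_q_pos: "prime_power_q q \<Longrightarrow> 0 < q"
  unfolding prime_power_q_def by (auto simp: prime_gt_0_nat)

lemma two_herm_genus: "2 * herm_genus q = int q * (int q - 1)"
  unfolding herm_genus_def by simp

definition herm_point_bound :: "nat \<Rightarrow> nat \<Rightarrow> nat \<Rightarrow> int" where
  "herm_point_bound q X T = int q ^ 3 - 3 * int q ^ 2 + int q + 1 - (int X + int T)"

definition herm_max_length :: "nat \<Rightarrow> nat \<Rightarrow> nat \<Rightarrow> int" where
  "herm_max_length q X T = herm_point_bound q X T div (2 * int q) * int q - herm_genus q"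

lemma herm_admissible_iff:
  "herm_admissible q X T L \<longleftrightarrow>
     1 \<le> L \<and> int q dvd L + herm_genus q \<and> 2 * (L + herm_genus q) \<le> herm_point_bound q X T"
  using two_herm_genus[of q]
  unfolding herm_admissible_def herm_point_bound_def
  by (auto simp: mod_eq_0_iff_dvd algebra_simps power2_eq_square power3_eq_cube)

lemma herm_admissible_le_max_length:
  assumes "0 < q" and "herm_admissible q X T L"
  shows "L \<le> herm_max_length q X T"
proof -
  obtain j where j: "L + herm_genus q = int q * j" and
    bound: "2 * (int q * j) \<le> herm_point_bound q X T"
    using assms(2) by (auto simp: herm_admissible_iff)
  have "j \<le> herm_point_bound q X T div (2 * int q)"
    using assms(1) bound by (simp add: le_div_iff_mult_le mult.assoc)
  then have "j * int q \<le> herm_point_bound q X T div (2 * int q) * int q"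
    by (simp add: mult_right_mono)
  then show ?thesis
    unfolding herm_max_length_def using j by (simp add: algebra_simps)
qed

lemma herm_admissible_max_length:
  assumes "0 < q" and "herm_admissible q X T L"
  shows "herm_admissible q X T (herm_max_length q X T)"
proof -
  define m where "m = herm_point_bound q X T div (2 * int q)"
  have "1 \<le> herm_max_length q X T"
    using assms herm_admissible_le_max_length[OF assms] by (simp add: herm_admissible_iff)
  moreover have "herm_max_length q X T + herm_genus q = int q * m"
    unfolding herm_max_length_def m_def by simp
  moreover have "2 * (int q * m) \<le> herm_point_bound q X T"
    using le_div_iff_mult_le[of "2 * int q" m "herm_point_bound q X T"] assms(1)
    unfolding m_def by (simp add: mult.assoc)
  ultimately show ?thesis
    by (simp add: herm_admissible_iff)
qed

lemma herm_servers_eq_add: "herm_servers q X T L = L + herm_servers q X T 0"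
  unfolding herm_servers_def by simp

lemma herm_servers_zero_pos:
  assumes "1 \<le> q" and "1 \<le> X" and "1 \<le> T"
  shows "0 < herm_servers q X T 0"
proof -
  have "int q \<le> int q ^ 2"
    using assms(1) by (simp add: power2_eq_square)
  then show ?thesis
    using assms unfolding herm_servers_def by linarith
qed

lemma herm_rate_mono:
  assumes "1 \<le> q" and "1 \<le> X" and "1 \<le> T" and "0 \<le> L" and "L \<le> L'"
  shows "herm_rate q X T L \<le> herm_rate q X T L'"
proof -
  define c where "c = real_of_int (herm_servers q X T 0)"
  have "0 < c"
    unfolding c_def using herm_servers_zero_pos[OF assms(1-3)] by simp
  then have "real_of_int L / (real_of_int L + c) \<le> real_of_int L' / (real_of_int L' + c)"
    using assms(4,5) by (intro divide_add_right_mono) auto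
  then show ?thesis
    unfolding herm_rate_def c_def by (subst (1 2) herm_servers_eq_add) simp
qed

theorem proposition3p5:
  fixes q X T :: nat
  assumes "prime_power_q q"
    and "X \<ge> 1" and "T \<ge> 1"
    and "\<exists>L. herm_admissible q X T L"
  defines "m \<equiv> \<lfloor>(real q ^ 3 - 3 * real q ^ 2 + real q + 1 - (real X + real T)) / (2 * real q)\<rfloor>"
  defines "Lmax \<equiv> m * int q - herm_genus q"
  shows "herm_rate q X T Lmax \<in> herm_rates q X T
         \<and> (\<forall>r \<in> herm_rates q X T. r \<le> herm_rate q X T Lmax)"
proof -
  have q_pos: "0 < q"
    using assms(1) by (rule prime_power_q_pos)
  have "m = \<lfloor>real_of_int (herm_point_bound q X T) / real_of_int (2 * int q)\<rfloor>"
    unfolding m_def herm_point_bound_def by simp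
  then have "m = herm_point_bound q X T div (2 * int q)"
    by (simp only: floor_divide_of_int_eq)
  then have Lmax: "Lmax = herm_max_length q X T"
    unfolding Lmax_def herm_max_length_def by simp
  obtain L0 where "herm_admissible q X T L0"
    using assms(4) by blast
  then have "herm_admissible q X T Lmax"
    unfolding Lmax by (rule herm_admissible_max_length [OF q_pos])
  moreover have "herm_rate q X T L \<le> herm_rate q X T Lmax" if "herm_admissible q X T L" for L
    using that q_pos assms(2,3) herm_admissible_le_max_length[OF q_pos that]
    by (intro herm_rate_mono) (auto simp: Lmax herm_admissible_def)
  ultimately show ?thesis
    unfolding herm_rates_def by auto
qed

end
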